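(* Let $(x_i,y_i)_{i=1}^7$ be point pairs in $\mathbb P^2\times\mathbb P^2$ and suppose there is an invertible projective transformation $H$ of $\mathbb P^2$ with $Hx_i=y_i$ for all $i$. Then the $7\times 9$ matrix $Z$ with rows $x_i^\top\otimes y_i^\top$ is rank deficient.
   Context: Work over $\mathbb C$; $x^\top\otimes y^\top$ denotes the Kronecker product, and equality $Hx_i=y_i$ is in projective space. *)

theory Defs
  imports "HOL-Analysis.Analysis"
begin

text \<open>Points of P^2 over C are represented by nonzero vectors in C^3.
  Two vectors represent the same projective point iff both are nonzero and
  one is a nonzero scalar multiple of the other.\<close>
definition proj_eq :: "complex^3 \<Rightarrow> complex^3 \<Rightarrow> bool" where
  "proj_eq u v \<longleftrightarrow> u \<noteq> 0 \<and> v \<noteq> 0 \<and> (\<exists>c. c \<noteq> 0 \<and> u = c *s v)"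

text \<open>Kronecker product of two vectors in C^3, indexed by pairs (a,b),
  entry x_a * y_b (column ordering of a 9-vector is immaterial for rank).\<close>
definition kron3 :: "complex^3 \<Rightarrow> complex^3 \<Rightarrow> complex^(3 \<times> 3)" where
  "kron3 x y = (\<chi> p. x $ fst p * y $ snd p)"

definition Zmat :: "(7 \<Rightarrow> complex^3) \<Rightarrow> (7 \<Rightarrow> complex^3) \<Rightarrow> complex^(3 \<times> 3)^7" where
  "Zmat x y = (\<chi> i. kron3 (x i) (y i))"

end

theory Submission
  imports Defs
begin

text \<open>If \<open>H x\<^sub>i\<close> and \<open>y\<^sub>i\<close> are proportional, the row \<open>x\<^sub>i \<otimes> y\<^sub>i\<close> is a nonzero multiple
  of \<open>q(x\<^sub>i) = x\<^sub>i \<otimes> H x\<^sub>i\<close>. The map \<open>q\<close> is quadratic in \<open>x\<close>, so all its values lie in the span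
  of the six polarizations \<open>e\<^sub>a \<otimes> H e\<^sub>b + e\<^sub>b \<otimes> H e\<^sub>a\<close> (\<open>a \<le> b\<close>), indexed by the monomials
  of degree two in three variables. Hence the seven rows span a space of dimension at most six.\<close>

lemma rank_le_card_if_rows_in_span:
  fixes A :: "'a::field^'n^'m"
  assumes "finite S" and "rows A \<subseteq> vec.span S"
  shows "rank A \<le> card S"
  unfolding row_rank_def_gen using assms by (intro vec.dim_le_card)

lemma kron3_scale_right: "kron3 x (c *s y) = c *s kron3 x y"
  by (simp add: kron3_def vec_eq_iff algebra_simps)

definition kron3_polar :: "complex^3^3 \<Rightarrow> 3 \<Rightarrow> 3 \<Rightarrow> complex^(3 \<times> 3)" where
  "kron3_polar H a b = kron3 (axis a 1) (H *v axis b 1) + kron3 (axis b 1) (H *v axis a 1)"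

lemma kron3_self_eq_polar_combination:
  "kron3 x (H *v x) =
     (x$1 * x$1 / 2) *s kron3_polar H 1 1 + (x$2 * x$2 / 2) *s kron3_polar H 2 2
     + (x$3 * x$3 / 2) *s kron3_polar H 3 3 + (x$1 * x$2) *s kron3_polar H 1 2
     + (x$1 * x$3) *s kron3_polar H 1 3 + (x$2 * x$3) *s kron3_polar H 2 3"
  (is "?q = ?combination")
proof -
  have "?q $ (a, b) = ?combination $ (a, b)" for a b
    using exhaust_3[of a]
    by (auto simp: kron3_polar_def kron3_def matrix_vector_mult_def axis_def sum_3 field_simps)
  then show ?thesis by (simp add: vec_eq_iff)
qed

definition kron3_polars :: "complex^3^3 \<Rightarrow> (complex^(3 \<times> 3)) set" where
  "kron3_polars H = set [kron3_polar H 1 1, kron3_polar H 2 2, kron3_polar H 3 3,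
     kron3_polar H 1 2, kron3_polar H 1 3, kron3_polar H 2 3]"

lemma card_kron3_polars_le: "card (kron3_polars H) \<le> 6"
  unfolding kron3_polars_def by (rule order_trans[OF card_length]) simp

lemma kron3_self_in_span_polars: "kron3 x (H *v x) \<in> vec.span (kron3_polars H)"
  unfolding kron3_self_eq_polar_combination
  by (intro vec.span_add vec.span_scale vec.span_base) (auto simp: kron3_polars_def)

theorem mainTheorem18:
  fixes x y :: "7 \<Rightarrow> complex^3" and H :: "complex^3^3"
  assumes "\<And>i. x i \<noteq> 0" and "\<And>i. y i \<noteq> 0"
    and "invertible H"
    and "\<And>i. proj_eq (H *v x i) (y i)"
  shows "rank (Zmat x y) < 7"
proof -
  have "rows (Zmat x y) \<subseteq> vec.span (kron3_polars H)"
  proof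
    fix r assume "r \<in> rows (Zmat x y)"
    then obtain i where r: "r = kron3 (x i) (y i)"
      by (auto simp: rows_def row_def Zmat_def vec_lambda_eta)
    obtain c where "c \<noteq> 0" and "H *v x i = c *s y i"
      using assms(4)[of i] by (auto simp: proj_eq_def)
    then have "r = inverse c *s kron3 (x i) (H *v x i)"
      by (simp add: r kron3_scale_right)
    then show "r \<in> vec.span (kron3_polars H)"
      by (simp add: vec.span_scale kron3_self_in_span_polars)
  qed
  then have "rank (Zmat x y) \<le> card (kron3_polars H)"
    by (intro rank_le_card_if_rows_in_span) (simp add: kron3_polars_def)
  then show ?thesis using card_kron3_polars_le[of H] by simp
qed

end
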